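(* Let $k_n\to\infty$ and $N_n\to\infty$, and for each $n$ let $X_{1,n},\dots,X_{N_n,n}$ be i.i.d. random vectors in $\mathbb{R}^{k_n}$ with $\mathbb E X_{j,n}=0$ and $\mathrm{cov}(X_{j,n})=I_{k_n}$. Assume that for every $\epsilon>0$ $$\lim_n\frac1{N_n}\sum_{j=1}^{N_n}\mathbb E\Big[\|X_{j,n}\|_2^2\,\mathbf 1\{\|X_{j,n}\|_2>\epsilon\sqrt{N_n}\}\Big]=0.$$ Let $\psi_n$ be the characteristic function of $\frac1{\sqrt{N_n}}\sum_{j}X_{j,n}$ and $\phi_n$ that of the $k_n$-dimensional standard Gaussian distribution. Then for each $\epsilon>0$ and $T>0$ there exists $n^0(\epsilon,T)$ such that for all $n>n^0(\epsilon,T)$, $$\sup\{|\psi_n(t)-\phi_n(t)|:\|t\|_2\le T\}<\epsilon.$$ *)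

theory Defs
  imports "HOL-Probability.Probability"
begin

text \<open>Vectors of R^k are represented as functions nat => real, only the
coordinates i < k being relevant (in the product measure they are extensional
on {..<k}).\<close>

definition vnorm :: "nat \<Rightarrow> (nat \<Rightarrow> real) \<Rightarrow> real" where
  "vnorm k x = sqrt (\<Sum>i<k. (x i)\<^sup>2)"

definition Rk :: "nat \<Rightarrow> (nat \<Rightarrow> real) measure" where
  "Rk k = PiM {..<k} (\<lambda>_. borel)"

definition vec_char :: "nat \<Rightarrow> (nat \<Rightarrow> real) measure \<Rightarrow> (nat \<Rightarrow> real) \<Rightarrow> complex" where
  "vec_char k \<mu> t = (CLINT x|\<mu>. iexp (\<Sum>i<k. t i * x i))"

definition std_gauss :: "nat \<Rightarrow> (nat \<Rightarrow> real) measure" where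
  "std_gauss k = PiM {..<k} (\<lambda>_. std_normal_distribution)"

end

theory Submission
  imports Defs
begin

(*
  For fixed t the characteristic function of N^(-1/2) * sum_j X_j factorises into the characteristic
  functions of the real variables u_j = <t, X_j> / sqrt N, which have mean 0 and variance |t|^2 / N.
  Each factor is compared with exp (-|t|^2 / (2 N)) by the Taylor bound min (6 u^2, |u|^3) / 6,
  splitting according to whether |X_j| exceeds delta * sqrt N, and the products are compared by
  telescoping (all factors lie in the unit disc). For |t| <= T this gives, uniformly in the dimension,
    |psi_n t - phi_n t| <= T^3 delta / 6 + T^2 L_n(delta) + T^4 / (4 N_n)
  with L_n(delta) the Lindeberg quantity; choosing delta = 3 eps / T^3 and letting n tend to infinity
  concludes.
*)

lemma vnorm_nonneg: "0 \<le> vnorm k x"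
  unfolding vnorm_def by (simp add: sum_nonneg)

lemma power2_vnorm: "(vnorm k x)\<^sup>2 = (\<Sum>i<k. (x i)\<^sup>2)"
  unfolding vnorm_def by (simp add: sum_nonneg)

lemma abs_sum_mult_le_vnorm: "\<bar>\<Sum>i<k. t i * x i\<bar> \<le> vnorm k t * vnorm k x"
proof -
  have "\<bar>\<Sum>i<k. t i * x i\<bar> \<le> (\<Sum>i<k. \<bar>t i\<bar> * \<bar>x i\<bar>)"
    by (metis (no_types, lifting) abs_mult sum_abs sum.cong)
  also have "\<dots> \<le> L2_set t {..<k} * L2_set x {..<k}" by (rule L2_set_mult_ineq)
  finally show ?thesis unfolding vnorm_def L2_set_def by (simp add: power2_eq_square)
qed

lemma abs_exp_minus_linear_le:
  fixes x :: real
  assumes "0 \<le> x"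
  shows "\<bar>exp (- x) - (1 - x)\<bar> \<le> x\<^sup>2"
proof -
  have lower: "1 - x \<le> exp (- x)" using exp_ge_add_one_self[of "- x"] by simp
  have "exp (- x) \<le> 1 / (1 + x)"
    using exp_ge_add_one_self[of x] assms by (simp add: exp_minus divide_simps)
  also have "\<dots> = 1 - x + x\<^sup>2 / (1 + x)" using assms
    by (simp add: field_simps power2_eq_square)
  also have "x\<^sup>2 / (1 + x) \<le> x\<^sup>2" using assms
    by (simp add: divide_le_eq mult_le_cancel_left1)
  finally show ?thesis using lower by simp
qed

lemma min_sq_cube_le_truncated:
  fixes u r a d :: real
  assumes "0 \<le> a" "0 \<le> d" "\<bar>u\<bar> \<le> a * r"
  shows "min (6 * u\<^sup>2) (\<bar>u\<bar> ^ 3) \<le> a * d * u\<^sup>2 + 6 * a\<^sup>2 * (r\<^sup>2 * indicator {d<..} r)"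
proof (cases "d < r")
  case True
  have "u\<^sup>2 \<le> (a * r)\<^sup>2" using assms(3) by (metis abs_ge_zero power2_abs power_mono)
  then have "min (6 * u\<^sup>2) (\<bar>u\<bar> ^ 3) \<le> 6 * a\<^sup>2 * (r\<^sup>2 * indicator {d<..} r)"
    using True by (simp add: power_mult_distrib)
  moreover have "0 \<le> a * d * u\<^sup>2" using assms(1,2) by simp
  ultimately show ?thesis by linarith
next
  case False
  have "\<bar>u\<bar> \<le> a * d" using assms False by (meson mult_left_mono not_less order_trans)
  then have "\<bar>u\<bar> * u\<^sup>2 \<le> a * d * u\<^sup>2" by (intro mult_right_mono) auto
  then show ?thesis using False by (simp add: power3_eq_cube power2_eq_square abs_mult_self_eq)
qed

lemma sum_error_terms_le:
  fixes L :: "nat \<Rightarrow> real" and s T \<delta> :: real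
  assumes "finite J" "J \<noteq> {}" "0 \<le> s" "s \<le> T\<^sup>2" "0 \<le> T" "0 \<le> \<delta>"
  defines "n \<equiv> real (card J)"
  shows "(\<Sum>j\<in>J. (T * \<delta> * (s * (1 / n)) + 6 * T\<^sup>2 * (1 / n) * L j) / 6 + (s * (1 / n) / 2)\<^sup>2)
    \<le> T ^ 3 * \<delta> / 6 + T\<^sup>2 * ((1 / n) * (\<Sum>j\<in>J. L j)) + T ^ 4 / 4 / n"
proof -
  have "n > 0" unfolding n_def using assms(1,2) by (simp add: card_gt_0_iff)
  have "(\<Sum>j\<in>J. (T * \<delta> * (s * (1 / n)) + 6 * T\<^sup>2 * (1 / n) * L j) / 6 + (s * (1 / n) / 2)\<^sup>2)
      = n * (T * \<delta> * (s * (1 / n)) / 6 + (s * (1 / n) / 2)\<^sup>2) + T\<^sup>2 * (1 / n) * (\<Sum>j\<in>J. L j)"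
    unfolding n_def by (simp add: sum.distrib sum_distrib_left sum_distrib_right sum_divide_distrib add_divide_distrib algebra_simps)
  also have "\<dots> = T * \<delta> * s / 6 + T\<^sup>2 * ((1 / n) * (\<Sum>j\<in>J. L j)) + s\<^sup>2 / 4 / n"
    using \<open>n > 0\<close> by (simp add: field_simps power2_eq_square)
  also have "\<dots> \<le> T ^ 3 * \<delta> / 6 + T\<^sup>2 * ((1 / n) * (\<Sum>j\<in>J. L j)) + T ^ 4 / 4 / n"
  proof -
    have "T * \<delta> * s \<le> T * \<delta> * T\<^sup>2"
      using assms(4-6) by (intro mult_left_mono) auto
    then have "T * \<delta> * s / 6 \<le> T ^ 3 * \<delta> / 6" by (simp add: power2_eq_square power3_eq_cube mult_ac)
    moreover have "s\<^sup>2 \<le> (T\<^sup>2)\<^sup>2" using assms(3,4) by (intro power_mono) auto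
    then have "s\<^sup>2 / 4 / n \<le> T ^ 4 / 4 / n" using \<open>n > 0\<close> by (intro divide_right_mono) auto
    ultimately show ?thesis by linarith
  qed
  finally show ?thesis .
qed

lemma vec_char_std_gauss:
  "vec_char k (std_gauss k) t = complex_of_real (exp (- (\<Sum>i<k. (t i)\<^sup>2) / 2))"
proof -
  interpret std: real_distribution std_normal_distribution by (rule real_dist_normal_dist)
  interpret product_prob_space "\<lambda>_. std_normal_distribution" by unfold_locales
  have "vec_char k (std_gauss k) t
      = (\<integral>x. (\<Prod>i<k. iexp (t i * x i)) \<partial>PiM {..<k} (\<lambda>_. std_normal_distribution))"
    unfolding vec_char_def std_gauss_def by (simp add: exp_sum[symmetric] sum_distrib_left)
  also have "\<dots> = (\<Prod>i<k. char std_normal_distribution (t i))"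
    unfolding char_def by (rule product_integral_prod) (auto intro!: std.integrable_iexp)
  also have "\<dots> = (\<Prod>i<k. complex_of_real (exp (- (t i)\<^sup>2 / 2)))"
    by (simp add: char_std_normal_distribution)
  also have "\<dots> = complex_of_real (exp (- (\<Sum>i<k. (t i)\<^sup>2) / 2))"
    by (simp add: exp_sum[symmetric] sum_negf sum_divide_distrib of_real_prod[symmetric])
  finally show ?thesis .
qed

lemma abs_mult_le_sum_squares:
  fixes a b :: real
  shows "\<bar>a * b\<bar> \<le> a\<^sup>2 + b\<^sup>2"
proof -
  have "2 * \<bar>a\<bar> * \<bar>b\<bar> \<le> a\<^sup>2 + b\<^sup>2" using sum_squares_bound[of "\<bar>a\<bar>" "\<bar>b\<bar>"] by simp
  moreover have "0 \<le> \<bar>a\<bar> * \<bar>b\<bar>" by simp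
  ultimately show ?thesis unfolding abs_mult by linarith
qed

context prob_space
begin

lemma char_minus_gauss_le:
  fixes u :: "'a \<Rightarrow> real"
  assumes [measurable]: "u \<in> borel_measurable M"
    and "integrable M u" "integrable M (\<lambda>\<omega>. (u \<omega>)\<^sup>2)"
    and "expectation u = 0" "expectation (\<lambda>\<omega>. (u \<omega>)\<^sup>2) = \<sigma>2"
  shows "cmod (char (distr M borel u) 1 - complex_of_real (exp (- \<sigma>2 / 2)))
    \<le> expectation (\<lambda>\<omega>. min (6 * (u \<omega>)\<^sup>2) (\<bar>u \<omega>\<bar> ^ 3)) / 6 + (\<sigma>2 / 2)\<^sup>2"
proof -
  have "0 \<le> \<sigma>2" using assms(5) by (metis integral_nonneg_AE zero_le_power2 AE_I2)
  have "cmod (char (distr M borel u) 1 - complex_of_real (exp (- \<sigma>2 / 2)))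
      \<le> cmod (char (distr M borel u) 1 - (1 - \<sigma>2 / 2)) + cmod (complex_of_real (1 - \<sigma>2 / 2 - exp (- \<sigma>2 / 2)))"
    using norm_triangle_ineq[of "char (distr M borel u) 1 - (1 - \<sigma>2 / 2)"
        "complex_of_real (1 - \<sigma>2 / 2 - exp (- \<sigma>2 / 2))"] by simp
  also have "cmod (char (distr M borel u) 1 - (1 - \<sigma>2 / 2))
      \<le> expectation (\<lambda>\<omega>. min (6 * (u \<omega>)\<^sup>2) (\<bar>u \<omega>\<bar> ^ 3)) / 6"
    using char_approx3'[of u "\<sigma>2" "distr M borel u" 1] assms by simp
  also have "cmod (complex_of_real (1 - \<sigma>2 / 2 - exp (- \<sigma>2 / 2))) \<le> (\<sigma>2 / 2)\<^sup>2"
  proof -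
    have "\<bar>exp (- \<sigma>2 / 2) - (1 - \<sigma>2 / 2)\<bar> \<le> (\<sigma>2 / 2)\<^sup>2"
      using abs_exp_minus_linear_le[of "\<sigma>2 / 2"] \<open>0 \<le> \<sigma>2\<close> by simp
    then show ?thesis unfolding norm_of_real by linarith
  qed
  finally show ?thesis by simp
qed

lemma expectation_min_sq_cube_le_truncated:
  fixes u r :: "'a \<Rightarrow> real"
  assumes [measurable]: "u \<in> borel_measurable M" "r \<in> borel_measurable M"
    and "integrable M (\<lambda>\<omega>. (u \<omega>)\<^sup>2)" "integrable M (\<lambda>\<omega>. (r \<omega>)\<^sup>2)"
    and "0 \<le> a" "0 \<le> d" "\<And>\<omega>. \<bar>u \<omega>\<bar> \<le> a * r \<omega>"
  shows "expectation (\<lambda>\<omega>. min (6 * (u \<omega>)\<^sup>2) (\<bar>u \<omega>\<bar> ^ 3))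
    \<le> a * d * expectation (\<lambda>\<omega>. (u \<omega>)\<^sup>2)
      + 6 * a\<^sup>2 * expectation (\<lambda>\<omega>. (r \<omega>)\<^sup>2 * indicator {d<..} (r \<omega>))"
proof -
  have int_min: "integrable M (\<lambda>\<omega>. min (6 * (u \<omega>)\<^sup>2) (\<bar>u \<omega>\<bar> ^ 3))"
    by (rule Bochner_Integration.integrable_bound[of _ "\<lambda>\<omega>. 6 * (u \<omega>)\<^sup>2"]) (use assms in auto)
  have int_trunc: "integrable M (\<lambda>\<omega>. (r \<omega>)\<^sup>2 * indicator {d<..} (r \<omega>))"
    by (rule Bochner_Integration.integrable_bound[of _ "\<lambda>\<omega>. (r \<omega>)\<^sup>2"])
      (use assms in \<open>auto simp: indicator_def\<close>)
  have "expectation (\<lambda>\<omega>. min (6 * (u \<omega>)\<^sup>2) (\<bar>u \<omega>\<bar> ^ 3))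
      \<le> expectation (\<lambda>\<omega>. a * d * (u \<omega>)\<^sup>2 + 6 * a\<^sup>2 * ((r \<omega>)\<^sup>2 * indicator {d<..} (r \<omega>)))"
    using int_min int_trunc assms(3) min_sq_cube_le_truncated[OF assms(5,6,7)]
    by (intro integral_mono) auto
  also have "\<dots> = a * d * expectation (\<lambda>\<omega>. (u \<omega>)\<^sup>2)
      + 6 * a\<^sup>2 * expectation (\<lambda>\<omega>. (r \<omega>)\<^sup>2 * indicator {d<..} (r \<omega>))"
    using int_trunc assms(3) by simp
  finally show ?thesis .
qed

context
  fixes Y :: "'a \<Rightarrow> nat \<Rightarrow> real" and k :: nat
  assumes coord_measurable: "\<And>i. i < k \<Longrightarrow> (\<lambda>\<omega>. Y \<omega> i) \<in> borel_measurable M"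
    and coord_square_integrable: "\<And>i. i < k \<Longrightarrow> integrable M (\<lambda>\<omega>. (Y \<omega> i)\<^sup>2)"
begin

lemma integrable_coord:
  "i < k \<Longrightarrow> integrable M (\<lambda>\<omega>. Y \<omega> i)"
  by (rule square_integrable_imp_integrable[OF coord_measurable coord_square_integrable])

lemma integrable_coord_mult:
  assumes "i < k" "l < k"
  shows "integrable M (\<lambda>\<omega>. Y \<omega> i * Y \<omega> l)"
  by (rule Bochner_Integration.integrable_bound[of _ "\<lambda>\<omega>. (Y \<omega> i)\<^sup>2 + (Y \<omega> l)\<^sup>2"])
    (use assms coord_measurable coord_square_integrable abs_mult_le_sum_squares in auto)

lemma square_linear_form:
  "(\<Sum>i<k. t i * Y \<omega> i)\<^sup>2 = (\<Sum>i<k. \<Sum>l<k. t i * t l * (Y \<omega> i * Y \<omega> l))"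
  by (simp add: power2_eq_square sum_product mult_ac)

lemma integrable_linear_form: "integrable M (\<lambda>\<omega>. \<Sum>i<k. t i * Y \<omega> i)"
  using integrable_coord by auto

lemma integrable_linear_form_square: "integrable M (\<lambda>\<omega>. (\<Sum>i<k. t i * Y \<omega> i)\<^sup>2)"
  unfolding square_linear_form
  by (intro Bochner_Integration.integrable_sum Bochner_Integration.integrable_mult_right
      integrable_coord_mult) auto

lemma expectation_linear_form:
  assumes "\<And>i. i < k \<Longrightarrow> expectation (\<lambda>\<omega>. Y \<omega> i) = 0"
  shows "expectation (\<lambda>\<omega>. \<Sum>i<k. t i * Y \<omega> i) = 0"
  using integrable_coord assms by simp

lemma expectation_linear_form_square:
  assumes "\<And>i l. i < k \<Longrightarrow> l < k \<Longrightarrow> expectation (\<lambda>\<omega>. Y \<omega> i * Y \<omega> l) = (if i = l then 1 else 0)"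
  shows "expectation (\<lambda>\<omega>. (\<Sum>i<k. t i * Y \<omega> i)\<^sup>2) = (\<Sum>i<k. (t i)\<^sup>2)"
proof -
  have inner: "integrable M (\<lambda>\<omega>. \<Sum>l<k. t i * t l * (Y \<omega> i * Y \<omega> l))" if "i < k" for i
    by (intro Bochner_Integration.integrable_sum Bochner_Integration.integrable_mult_right
        integrable_coord_mult that) auto
  have "expectation (\<lambda>\<omega>. (\<Sum>i<k. t i * Y \<omega> i)\<^sup>2)
      = (\<Sum>i<k. \<Sum>l<k. t i * t l * expectation (\<lambda>\<omega>. Y \<omega> i * Y \<omega> l))"
    unfolding square_linear_form using inner integrable_coord_mult
    by (simp add: Bochner_Integration.integral_sum)
  also have "\<dots> = (\<Sum>i<k. \<Sum>l<k. t i * t l * (if i = l then 1 else 0))"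
    using assms by (intro sum.cong refl) auto
  also have "\<dots> = (\<Sum>i<k. (t i)\<^sup>2)"
    by (simp add: power2_eq_square if_distrib cong: if_cong)
  finally show ?thesis .
qed

lemma cmod_char_linear_form_minus_gauss_le:
  assumes mean: "\<And>i. i < k \<Longrightarrow> expectation (\<lambda>\<omega>. Y \<omega> i) = 0"
    and cov: "\<And>i l. i < k \<Longrightarrow> l < k \<Longrightarrow> expectation (\<lambda>\<omega>. Y \<omega> i * Y \<omega> l) = (if i = l then 1 else 0)"
    and "0 < c" "0 \<le> d" and t: "vnorm k t \<le> T"
  shows "cmod (char (distr M borel (\<lambda>\<omega>. c * (\<Sum>i<k. t i * Y \<omega> i))) 1
      - complex_of_real (exp (- ((\<Sum>i<k. (t i)\<^sup>2) * c\<^sup>2) / 2)))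
    \<le> (T * c * d * ((\<Sum>i<k. (t i)\<^sup>2) * c\<^sup>2)
        + 6 * T\<^sup>2 * c\<^sup>2 * expectation (\<lambda>\<omega>. (vnorm k (Y \<omega>))\<^sup>2 * indicator {d<..} (vnorm k (Y \<omega>)))) / 6
      + ((\<Sum>i<k. (t i)\<^sup>2) * c\<^sup>2 / 2)\<^sup>2"
proof -
  define s where "s = (\<Sum>i<k. (t i)\<^sup>2)"
  define u where "u \<omega> = c * (\<Sum>i<k. t i * Y \<omega> i)" for \<omega>
  define L where "L = expectation (\<lambda>\<omega>. (vnorm k (Y \<omega>))\<^sup>2 * indicator {d<..} (vnorm k (Y \<omega>)))"
  note moments = integrable_linear_form integrable_linear_form_square
    expectation_linear_form[OF mean] expectation_linear_form_square[OF cov]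
  have "0 \<le> T" using t vnorm_nonneg order_trans by blast
  have u_measurable: "u \<in> borel_measurable M"
    unfolding u_def using coord_measurable by measurable
  have u_square: "(u \<omega>)\<^sup>2 = c\<^sup>2 * (\<Sum>i<k. t i * Y \<omega> i)\<^sup>2" for \<omega>
    unfolding u_def by (simp add: power_mult_distrib)
  have u_square_integrable: "integrable M (\<lambda>\<omega>. (u \<omega>)\<^sup>2)"
    unfolding u_square using moments by simp
  have u_variance: "expectation (\<lambda>\<omega>. (u \<omega>)\<^sup>2) = s * c\<^sup>2"
    unfolding u_square s_def using moments by simp
  have "integrable M u" "expectation u = 0"
    unfolding u_def using moments by simp_all
  note char_bound = char_minus_gauss_le[OF u_measurable this(1) u_square_integrable this(2) u_variance]
  have r_measurable: "(\<lambda>\<omega>. vnorm k (Y \<omega>)) \<in> borel_measurable M"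
    unfolding vnorm_def using coord_measurable by measurable
  have r_square_integrable: "integrable M (\<lambda>\<omega>. (vnorm k (Y \<omega>))\<^sup>2)"
    unfolding power2_vnorm using coord_square_integrable by auto
  have u_bound: "\<bar>u \<omega>\<bar> \<le> T * c * vnorm k (Y \<omega>)" for \<omega>
  proof -
    have "\<bar>u \<omega>\<bar> = c * \<bar>\<Sum>i<k. t i * Y \<omega> i\<bar>" unfolding u_def using \<open>c > 0\<close> by (simp add: abs_mult)
    also have "\<dots> \<le> c * (vnorm k t * vnorm k (Y \<omega>))"
      using abs_sum_mult_le_vnorm \<open>c > 0\<close> by (intro mult_left_mono) auto
    also have "\<dots> \<le> T * c * vnorm k (Y \<omega>)"
      using t \<open>c > 0\<close> vnorm_nonneg[of k "Y \<omega>"] by (simp add: mult_right_mono mult.commute mult.left_commute)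
    finally show ?thesis .
  qed
  have "expectation (\<lambda>\<omega>. min (6 * (u \<omega>)\<^sup>2) (\<bar>u \<omega>\<bar> ^ 3)) / 6
      \<le> (T * c * d * (s * c\<^sup>2) + 6 * T\<^sup>2 * c\<^sup>2 * L) / 6"
    using expectation_min_sq_cube_le_truncated[OF u_measurable r_measurable u_square_integrable
        r_square_integrable _ \<open>0 \<le> d\<close> u_bound] \<open>0 \<le> T\<close> \<open>c > 0\<close>
    unfolding u_variance L_def by (simp add: power_mult_distrib)
  with char_bound show ?thesis unfolding u_def s_def L_def by linarith
qed

end

lemma vec_char_scaled_sum_indep:
  fixes X :: "nat \<Rightarrow> 'a \<Rightarrow> nat \<Rightarrow> real"
  assumes "finite J"
    and meas: "\<And>j i. j \<in> J \<Longrightarrow> i < k \<Longrightarrow> (\<lambda>\<omega>. X j \<omega> i) \<in> borel_measurable M"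
    and indep: "indep_vars (\<lambda>_. Rk k) (\<lambda>j \<omega>. restrict (X j \<omega>) {..<k}) J"
  shows "vec_char k (distr M (Rk k) (\<lambda>\<omega>. restrict (\<lambda>i. c * (\<Sum>j\<in>J. X j \<omega> i)) {..<k})) t
    = (\<Prod>j\<in>J. char (distr M borel (\<lambda>\<omega>. c * (\<Sum>i<k. t i * X j \<omega> i))) 1)"
proof -
  define u where "u j \<omega> = c * (\<Sum>i<k. t i * X j \<omega> i)" for j \<omega>
  have u_measurable: "u j \<in> borel_measurable M" if "j \<in> J" for j
    unfolding u_def using meas[OF that] by measurable
  have "indep_vars (\<lambda>_. borel) (\<lambda>j \<omega>. iexp (c * (\<Sum>i<k. t i * restrict (X j \<omega>) {..<k} i))) J"
    by (rule indep_vars_compose2[OF indep]) (simp add: Rk_def)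
  then have indep_iexp: "indep_vars (\<lambda>_. borel) (\<lambda>j \<omega>. iexp (u j \<omega>)) J"
    unfolding u_def by simp
  have sum_eq: "(\<Sum>i<k. t i * restrict (\<lambda>i. c * (\<Sum>j\<in>J. X j \<omega> i)) {..<k} i)
      = (\<Sum>j\<in>J. u j \<omega>)" for \<omega>
  proof -
    have "(\<Sum>i<k. t i * restrict (\<lambda>i. c * (\<Sum>j\<in>J. X j \<omega> i)) {..<k} i)
        = (\<Sum>i<k. \<Sum>j\<in>J. c * (t i * X j \<omega> i))"
      by (intro sum.cong refl) (simp add: sum_distrib_left mult_ac)
    also have "\<dots> = (\<Sum>j\<in>J. u j \<omega>)"
      unfolding u_def by (subst sum.swap) (simp add: sum_distrib_left)
    finally show ?thesis .
  qed
  have S_measurable: "(\<lambda>\<omega>. restrict (\<lambda>i. c * (\<Sum>j\<in>J. X j \<omega> i)) {..<k}) \<in> measurable M (Rk k)"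
    unfolding Rk_def using meas by measurable
  have "vec_char k (distr M (Rk k) (\<lambda>\<omega>. restrict (\<lambda>i. c * (\<Sum>j\<in>J. X j \<omega> i)) {..<k})) t
      = (CLINT \<omega>|M. iexp (\<Sum>i<k. t i * restrict (\<lambda>i. c * (\<Sum>j\<in>J. X j \<omega> i)) {..<k} i))"
    unfolding vec_char_def by (rule integral_distr[OF S_measurable]) (unfold Rk_def, measurable)
  also have "\<dots> = (CLINT \<omega>|M. (\<Prod>j\<in>J. iexp (u j \<omega>)))"
    unfolding sum_eq using \<open>finite J\<close> by (simp add: exp_sum[symmetric] sum_distrib_left)
  also have "\<dots> = (\<Prod>j\<in>J. CLINT \<omega>|M. iexp (u j \<omega>))"
    by (rule indep_vars_lebesgue_integral)
      (use \<open>finite J\<close> indep_iexp u_measurable in \<open>auto intro: integrable_iexp\<close>)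
  also have "\<dots> = (\<Prod>j\<in>J. char (distr M borel (u j)) 1)"
    unfolding char_def using u_measurable by (intro prod.cong refl) (simp add: integral_distr)
  finally show ?thesis unfolding u_def .
qed

lemma cmod_vec_char_normalized_sum_minus_gauss_le:
  fixes X :: "nat \<Rightarrow> 'a \<Rightarrow> nat \<Rightarrow> real" and J :: "nat set" and T \<delta> :: real
  assumes J: "finite J" "J \<noteq> {}"
    and meas: "\<And>j i. j \<in> J \<Longrightarrow> i < k \<Longrightarrow> (\<lambda>\<omega>. X j \<omega> i) \<in> borel_measurable M"
    and indep: "indep_vars (\<lambda>_. Rk k) (\<lambda>j \<omega>. restrict (X j \<omega>) {..<k}) J"
    and sq_int: "\<And>j i. j \<in> J \<Longrightarrow> i < k \<Longrightarrow> integrable M (\<lambda>\<omega>. (X j \<omega> i)\<^sup>2)"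
    and mean0: "\<And>j i. j \<in> J \<Longrightarrow> i < k \<Longrightarrow> expectation (\<lambda>\<omega>. X j \<omega> i) = 0"
    and cov: "\<And>j i l. j \<in> J \<Longrightarrow> i < k \<Longrightarrow> l < k \<Longrightarrow>
      expectation (\<lambda>\<omega>. X j \<omega> i * X j \<omega> l) = (if i = l then 1 else 0)"
    and "0 \<le> \<delta>" and t: "vnorm k t \<le> T"
  shows "cmod (vec_char k (distr M (Rk k) (\<lambda>\<omega>. restrict (\<lambda>i. (1 / sqrt (real (card J))) *
              (\<Sum>j\<in>J. X j \<omega> i)) {..<k})) t - vec_char k (std_gauss k) t)
    \<le> T ^ 3 * \<delta> / 6 + T\<^sup>2 * ((1 / real (card J)) * (\<Sum>j\<in>J.
          expectation (\<lambda>\<omega>. (vnorm k (X j \<omega>))\<^sup>2 *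
            indicator {\<omega>. vnorm k (X j \<omega>) > \<delta> * sqrt (real (card J))} \<omega>)))
      + T ^ 4 / 4 / real (card J)"
proof -
  define n where "n = real (card J)"
  define c where "c = 1 / sqrt n"
  define s where "s = (\<Sum>i<k. (t i)\<^sup>2)"
  define u where "u j \<omega> = c * (\<Sum>i<k. t i * X j \<omega> i)" for j \<omega>
  define L where "L j = expectation (\<lambda>\<omega>. (vnorm k (X j \<omega>))\<^sup>2 *
      indicator {\<omega>. vnorm k (X j \<omega>) > \<delta> * sqrt n} \<omega>)" for j
  have "n > 0" unfolding n_def using J by (simp add: card_gt_0_iff)
  then have c2: "c\<^sup>2 = 1 / n" and "c > 0" and c_sqrt: "c * sqrt n = 1"
    unfolding c_def by (simp_all add: power_divide)
  have "0 \<le> T" using t vnorm_nonneg order_trans by blast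
  have "0 \<le> s" unfolding s_def by (simp add: sum_nonneg)
  have s_le: "s \<le> T\<^sup>2"
    unfolding s_def power2_vnorm[symmetric] using t vnorm_nonneg by (simp add: power_mono)
  have summand: "cmod (char (distr M borel (u j)) 1 - complex_of_real (exp (- (s * c\<^sup>2) / 2)))
      \<le> (T * \<delta> * (s * c\<^sup>2) + 6 * T\<^sup>2 * c\<^sup>2 * L j) / 6 + (s * c\<^sup>2 / 2)\<^sup>2" if j: "j \<in> J" for j
  proof -
    have Tcd: "T * c * (\<delta> * sqrt n) = T * \<delta>" using c_sqrt by (simp add: mult_ac)
    have L_eq: "L j = expectation (\<lambda>\<omega>. (vnorm k (X j \<omega>))\<^sup>2 *
        indicator {\<delta> * sqrt n<..} (vnorm k (X j \<omega>)))"
      unfolding L_def by (simp add: indicator_def)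
    have "0 \<le> \<delta> * sqrt n" using \<open>0 \<le> \<delta>\<close> \<open>n > 0\<close> by simp
    from cmod_char_linear_form_minus_gauss_le[where Y = "X j" and k = k,
        OF meas[OF j] sq_int[OF j] mean0[OF j] cov[OF j] \<open>c > 0\<close> this t]
    show ?thesis unfolding Tcd L_eq u_def s_def .
  qed

  have psi: "vec_char k (distr M (Rk k) (\<lambda>\<omega>. restrict (\<lambda>i. c * (\<Sum>j\<in>J. X j \<omega> i)) {..<k})) t
      = (\<Prod>j\<in>J. char (distr M borel (u j)) 1)"
    unfolding u_def by (rule vec_char_scaled_sum_indep[OF J(1) meas indep])
  have phi: "vec_char k (std_gauss k) t = (\<Prod>j\<in>J. complex_of_real (exp (- (s * c\<^sup>2) / 2)))"
  proof -
    have "exp (- (s * c\<^sup>2) / 2) ^ card J = exp (n * (- (s * c\<^sup>2) / 2))"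
      unfolding n_def by (rule exp_of_nat_mult[symmetric])
    also have "n * (- (s * c\<^sup>2) / 2) = - s / 2" using c2 \<open>n > 0\<close> by (simp add: field_simps)
    finally show ?thesis unfolding vec_char_std_gauss s_def[symmetric] by (simp flip: of_real_power)
  qed
  have "cmod (vec_char k (distr M (Rk k) (\<lambda>\<omega>. restrict (\<lambda>i. c * (\<Sum>j\<in>J. X j \<omega> i)) {..<k})) t
        - vec_char k (std_gauss k) t)
      = cmod ((\<Prod>j\<in>J. char (distr M borel (u j)) 1) - (\<Prod>j\<in>J. complex_of_real (exp (- (s * c\<^sup>2) / 2))))"
    unfolding psi phi ..
  also have "\<dots> \<le> (\<Sum>j\<in>J. cmod (char (distr M borel (u j)) 1 - complex_of_real (exp (- (s * c\<^sup>2) / 2))))"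
  proof (rule norm_prod_diff)
    fix j assume "j \<in> J"
    have "real_distribution (distr M borel (u j))"
      unfolding u_def using meas[OF \<open>j \<in> J\<close>] by simp
    then show "cmod (char (distr M borel (u j)) 1) \<le> 1" by (rule real_distribution.cmod_char_le_1)
  qed (use \<open>0 \<le> s\<close> in simp)
  also have "\<dots> \<le> (\<Sum>j\<in>J. (T * \<delta> * (s * c\<^sup>2) + 6 * T\<^sup>2 * c\<^sup>2 * L j) / 6 + (s * c\<^sup>2 / 2)\<^sup>2)"
    by (rule sum_mono) (rule summand)
  also have "\<dots> \<le> T ^ 3 * \<delta> / 6 + T\<^sup>2 * ((1 / n) * (\<Sum>j\<in>J. L j)) + T ^ 4 / 4 / n"
    unfolding c2 n_def using J \<open>0 \<le> s\<close> s_le \<open>0 \<le> T\<close> \<open>0 \<le> \<delta>\<close> by (rule sum_error_terms_le)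
  finally show ?thesis unfolding c_def L_def n_def .
qed

lemma Sup_cmod_vec_char_normalized_sum_minus_gauss_le:
  fixes X :: "nat \<Rightarrow> 'a \<Rightarrow> nat \<Rightarrow> real" and J :: "nat set" and T \<delta> :: real
  assumes "finite J" "J \<noteq> {}"
    and "\<And>j i. j \<in> J \<Longrightarrow> i < k \<Longrightarrow> (\<lambda>\<omega>. X j \<omega> i) \<in> borel_measurable M"
    and "indep_vars (\<lambda>_. Rk k) (\<lambda>j \<omega>. restrict (X j \<omega>) {..<k}) J"
    and "\<And>j i. j \<in> J \<Longrightarrow> i < k \<Longrightarrow> integrable M (\<lambda>\<omega>. (X j \<omega> i)\<^sup>2)"
    and "\<And>j i. j \<in> J \<Longrightarrow> i < k \<Longrightarrow> expectation (\<lambda>\<omega>. X j \<omega> i) = 0"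
    and "\<And>j i l. j \<in> J \<Longrightarrow> i < k \<Longrightarrow> l < k \<Longrightarrow>
      expectation (\<lambda>\<omega>. X j \<omega> i * X j \<omega> l) = (if i = l then 1 else 0)"
    and "0 \<le> \<delta>" "0 \<le> T"
  shows "Sup {cmod (vec_char k (distr M (Rk k) (\<lambda>\<omega>. restrict (\<lambda>i. (1 / sqrt (real (card J))) *
              (\<Sum>j\<in>J. X j \<omega> i)) {..<k})) t - vec_char k (std_gauss k) t) | t. vnorm k t \<le> T}
    \<le> T ^ 3 * \<delta> / 6 + T\<^sup>2 * ((1 / real (card J)) * (\<Sum>j\<in>J.
          expectation (\<lambda>\<omega>. (vnorm k (X j \<omega>))\<^sup>2 *
            indicator {\<omega>. vnorm k (X j \<omega>) > \<delta> * sqrt (real (card J))} \<omega>)))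
      + T ^ 4 / 4 / real (card J)"
proof (rule cSup_least)
  have "vnorm k (\<lambda>_. 0) \<le> T" using \<open>0 \<le> T\<close> by (simp add: vnorm_def)
  then show "{cmod (vec_char k (distr M (Rk k) (\<lambda>\<omega>. restrict (\<lambda>i. (1 / sqrt (real (card J))) *
      (\<Sum>j\<in>J. X j \<omega> i)) {..<k})) t - vec_char k (std_gauss k) t) | t. vnorm k t \<le> T} \<noteq> {}"
    by blast
qed (use cmod_vec_char_normalized_sum_minus_gauss_le[OF assms(1-8)] in blast)

end

theorem lemma3:
  fixes M :: "nat \<Rightarrow> 'a measure"
    and X :: "nat \<Rightarrow> nat \<Rightarrow> 'a \<Rightarrow> nat \<Rightarrow> real"
    and k N :: "nat \<Rightarrow> nat"
  assumes k_lim: "filterlim k at_top sequentially"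
    and N_lim: "filterlim N at_top sequentially"
    and prob: "\<And>n. prob_space (M n)"
    and meas: "\<And>n j i. j \<in> {1..N n} \<Longrightarrow> i < k n \<Longrightarrow>
                 (\<lambda>\<omega>. X n j \<omega> i) \<in> borel_measurable (M n)"
    and indep: "\<And>n. prob_space.indep_vars (M n) (\<lambda>_. Rk (k n))
                 (\<lambda>j \<omega>. restrict (X n j \<omega>) {..<k n}) {1..N n}"
    and ident: "\<And>n j j'. j \<in> {1..N n} \<Longrightarrow> j' \<in> {1..N n} \<Longrightarrow>
                 distr (M n) (Rk (k n)) (\<lambda>\<omega>. restrict (X n j \<omega>) {..<k n})
               = distr (M n) (Rk (k n)) (\<lambda>\<omega>. restrict (X n j' \<omega>) {..<k n})"
    and sq_int: "\<And>n j i. j \<in> {1..N n} \<Longrightarrow> i < k n \<Longrightarrow>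
                 integrable (M n) (\<lambda>\<omega>. (X n j \<omega> i)\<^sup>2)"
    and mean0: "\<And>n j i. j \<in> {1..N n} \<Longrightarrow> i < k n \<Longrightarrow>
                 (LINT \<omega>|M n. X n j \<omega> i) = 0"
    and cov: "\<And>n j i l. j \<in> {1..N n} \<Longrightarrow> i < k n \<Longrightarrow> l < k n \<Longrightarrow>
                 (LINT \<omega>|M n. X n j \<omega> i * X n j \<omega> l) = (if i = l then 1 else 0)"
    and lindeberg: "\<And>\<epsilon>. \<epsilon> > 0 \<Longrightarrow>
                 (\<lambda>n. (1 / real (N n)) * (\<Sum>j\<in>{1..N n}.
                    LINT \<omega>|M n. (vnorm (k n) (X n j \<omega>))\<^sup>2 *
                      indicator {\<omega>. vnorm (k n) (X n j \<omega>) > \<epsilon> * sqrt (real (N n))} \<omega>))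
                 \<longlonglongrightarrow> 0"
  shows "\<forall>\<epsilon>>0. \<forall>T>0. \<exists>n0. \<forall>n>n0.
           Sup {cmod (vec_char (k n)
                        (distr (M n) (Rk (k n))
                          (\<lambda>\<omega>. restrict (\<lambda>i. (1 / sqrt (real (N n))) *
                                    (\<Sum>j\<in>{1..N n}. X n j \<omega> i)) {..<k n})) t
                      - vec_char (k n) (std_gauss (k n)) t)
                | t. vnorm (k n) t \<le> T} < \<epsilon>"
  (is "\<forall>\<epsilon>>0. \<forall>T>0. \<exists>n0. \<forall>n>n0. Sup (?dist T n) < \<epsilon>")
proof (intro allI impI)
  fix \<epsilon> T :: real
  assume "\<epsilon> > 0" "T > 0"
  define \<delta> where "\<delta> = 3 * \<epsilon> / T ^ 3"
  have "\<delta> > 0" unfolding \<delta>_def using \<open>\<epsilon> > 0\<close> \<open>T > 0\<close> by simp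
  define B where "B n = T ^ 3 * \<delta> / 6 + T\<^sup>2 * ((1 / real (N n)) * (\<Sum>j\<in>{1..N n}.
      LINT \<omega>|M n. (vnorm (k n) (X n j \<omega>))\<^sup>2 *
        indicator {\<omega>. vnorm (k n) (X n j \<omega>) > \<delta> * sqrt (real (N n))} \<omega>)) + T ^ 4 / 4 / real (N n)" for n
  have sup_le: "Sup (?dist T n) \<le> B n" if "1 \<le> N n" for n
    using prob_space.Sup_cmod_vec_char_normalized_sum_minus_gauss_le[OF prob _ _
        meas[where n = n] indep[of n] sq_int[where n = n] mean0[where n = n] cov[where n = n],
        where \<delta> = \<delta> and T = T] that \<open>\<delta> > 0\<close> \<open>T > 0\<close>
    unfolding B_def by simp
  have "(\<lambda>n. T ^ 4 / 4 / real (N n)) \<longlonglongrightarrow> 0"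
    by (rule tendsto_divide_0[OF tendsto_const filterlim_at_top_imp_at_infinity])
      (rule filterlim_compose[OF filterlim_real_sequentially N_lim])
  then have "B \<longlonglongrightarrow> T ^ 3 * \<delta> / 6 + T\<^sup>2 * 0 + 0"
    unfolding B_def by (intro tendsto_intros lindeberg \<open>\<delta> > 0\<close>)
  moreover have "T ^ 3 * \<delta> / 6 + T\<^sup>2 * 0 + 0 < \<epsilon>"
    unfolding \<delta>_def using \<open>\<epsilon> > 0\<close> \<open>T > 0\<close> by simp
  ultimately have "eventually (\<lambda>n. B n < \<epsilon>) sequentially" by (rule order_tendstoD(2))
  moreover have "eventually (\<lambda>n. 1 \<le> N n) sequentially"
    using N_lim by (simp add: filterlim_at_top)
  ultimately have "eventually (\<lambda>n. Sup (?dist T n) < \<epsilon>) sequentially"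
    by eventually_elim (use sup_le in \<open>fastforce intro: le_less_trans\<close>)
  then show "\<exists>n0. \<forall>n>n0. Sup (?dist T n) < \<epsilon>"
    unfolding eventually_sequentially by (meson less_imp_le)
qed

end
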